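(* Let $I$ and $J$ be $yx$-tight ideals in $K[x,y]$. Then $IJ$ is also a $yx$-tight ideal.
   Context: Let $J\subset K[x,y]$ be a $(x,y)$-primary monomial ideal with minimal monomial generating set $G(J)=\{x^{\alpha_i}y^{\beta_i}: i=0,\ldots,m\}$ ordered so that $\alpha_0>\cdots>\alpha_m=0$ and $0=\beta_0<\cdots<\beta_m$. $J$ is $x$-tight if $\alpha_{m-i}=i$ for all $i=0,\ldots,m$; $y$-tight if $\beta_i=i$ for all $i=0,\ldots,m$; $yx$-tight if there exists $0\le j\le m$ with $\beta_i=i$ for all $i=0,\ldots,j$ and $\alpha_{m-i}=i$ for all $i=0,\ldots,m-j$ (so $x$-tight and $y$-tight ideals are $yx$-tight). *)

theory Defs
  imports Main
begin

text \<open>A monomial ideal of K[x,y] is determined by the set of exponent pairs (a,b) of the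
monomials x^a y^b it contains; this set is closed under multiplication by monomials
(upward closed in the componentwise order).\<close>

definition monomial_ideal :: "(nat \<times> nat) set \<Rightarrow> bool" where
  "monomial_ideal M \<longleftrightarrow>
     (\<forall>a b c d. (a, b) \<in> M \<longrightarrow> a \<le> c \<longrightarrow> b \<le> d \<longrightarrow> (c, d) \<in> M)"

definition xy_primary :: "(nat \<times> nat) set \<Rightarrow> bool" where
  "xy_primary M \<longleftrightarrow> monomial_ideal M \<and> (0, 0) \<notin> M \<and>
     (\<exists>a. (a, 0) \<in> M) \<and> (\<exists>b. (0, b) \<in> M)"

definition min_gens :: "(nat \<times> nat) set \<Rightarrow> (nat \<times> nat) set" where
  "min_gens M = {(a, b) \<in> M. \<forall>c d. (c, d) \<in> M \<longrightarrow> c \<le> a \<longrightarrow> d \<le> b \<longrightarrow> (c, d) = (a, b)}"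

definition ideal_prod :: "(nat \<times> nat) set \<Rightarrow> (nat \<times> nat) set \<Rightarrow> (nat \<times> nat) set" where
  "ideal_prod I J = {(a, b). \<exists>a1 b1 a2 b2. (a1, b1) \<in> I \<and> (a2, b2) \<in> J \<and>
                                  a1 + a2 \<le> a \<and> b1 + b2 \<le> b}"

definition yx_tight :: "(nat \<times> nat) set \<Rightarrow> bool" where
  "yx_tight J \<longleftrightarrow> xy_primary J \<and>
     (\<exists>(m::nat) (\<alpha>::nat \<Rightarrow> nat) (\<beta>::nat \<Rightarrow> nat).
        min_gens J = {(\<alpha> i, \<beta> i) | i. i \<le> m} \<and>
        (\<forall>i j. i < j \<longrightarrow> j \<le> m \<longrightarrow> \<alpha> j < \<alpha> i \<and> \<beta> i < \<beta> j) \<and>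
        \<alpha> m = 0 \<and> \<beta> 0 = 0 \<and>
        (\<exists>j \<le> m. (\<forall>i \<le> j. \<beta> i = i) \<and> (\<forall>i \<le> m - j. \<alpha> (m - i) = i)))"

end

(* A monomial ideal M is yx-tight iff it is (x,y)-primary and contains a monomial x^p y^q such
   that every monomial of M of y-degree below q stays in M when one factor x is traded for a
   factor y, and every monomial of x-degree below p stays in M when one y is traded for an x.
   On the minimal generators x^alpha_i y^beta_i these trades force beta_(i+1) = beta_i + 1 below
   height q and alpha_(i-1) = alpha_i + 1 left of p, which is yx-tightness with the corner at a
   generator dividing x^p y^q.  Both trading properties pass to IJ with the bounds p1 + p2 and
   q1 + q2, because a monomial of IJ of y-degree below q1 + q2 is a multiple of a product of a
   monomial of I and one of J, one of which has y-degree below its own bound; and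
   x^(p1+p2) y^(q1+q2) lies in IJ. *)

theory Submission
  imports Defs
begin

lemma monomial_idealD:
  "monomial_ideal M \<Longrightarrow> (a, b) \<in> M \<Longrightarrow> a \<le> c \<Longrightarrow> b \<le> d \<Longrightarrow> (c, d) \<in> M"
  unfolding monomial_ideal_def by blast

lemma min_gens_subset: "min_gens M \<subseteq> M"
  by (auto simp: min_gens_def)

lemma min_gens_minimal:
  "(c, d) \<in> min_gens M \<Longrightarrow> (a, b) \<in> M \<Longrightarrow> a \<le> c \<Longrightarrow> b \<le> d \<Longrightarrow> a = c \<and> b = d"
  by (auto simp: min_gens_def)

lemma min_gens_below:
  assumes "(a, b) \<in> M"
  obtains c d where "(c, d) \<in> min_gens M" "c \<le> a" "d \<le> b"
proof -
  let ?below = "\<lambda>(c, d). (c, d) \<in> M \<and> c \<le> a \<and> d \<le> b"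
  obtain c d where cd: "?below (c, d)" and least: "\<And>z. ?below z \<Longrightarrow> c + d \<le> fst z + snd z"
    using ex_has_least_nat[of ?below "(a, b)" "\<lambda>(c, d). c + d"] assms by fastforce
  have "(c, d) \<in> min_gens M"
    unfolding min_gens_def using cd least by fastforce
  with cd show thesis using that by blast
qed

lemma min_gens_snd_inj: "inj_on snd (min_gens M)"
proof (rule inj_onI)
  fix u v assume "u \<in> min_gens M" "v \<in> min_gens M" "snd u = snd v"
  then obtain a b c where u: "(a, b) \<in> min_gens M" and v: "(c, b) \<in> min_gens M"
    and "u = (a, b)" "v = (c, b)"
    by (metis prod.collapse)
  have "a = c"
  proof (cases "a \<le> c")
    case True
    then show ?thesis using min_gens_minimal[OF v] u min_gens_subset by blast
  next
    case False
    then show ?thesis using min_gens_minimal[OF u] v min_gens_subset by force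
  qed
  then show "u = v" using \<open>u = (a, b)\<close> \<open>v = (c, b)\<close> by simp
qed

lemma min_gens_antichain:
  assumes "(a, b) \<in> min_gens M" "(c, d) \<in> min_gens M" "b < d"
  shows "c < a"
proof (rule ccontr)
  assume "\<not> c < a"
  moreover have "(a, b) \<in> M" using assms(1) min_gens_subset by blast
  ultimately show False
    using min_gens_minimal[OF assms(2) _ _ less_imp_le[OF assms(3)]] assms(3) by (simp add: not_less)
qed

lemma finite_min_gens:
  assumes "xy_primary M"
  shows "finite (min_gens M)"
proof -
  obtain A B where A: "(A, 0) \<in> M" and B: "(0, B) \<in> M"
    using assms by (auto simp: xy_primary_def)
  have "min_gens M \<subseteq> {..A} \<times> {..B}"
  proof
    fix z assume z: "z \<in> min_gens M"
    then have "\<not> A < fst z" "\<not> B < snd z"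
      using min_gens_minimal[of "fst z" "snd z" M A 0] min_gens_minimal[of "fst z" "snd z" M 0 B] A B
      by auto
    then show "z \<in> {..A} \<times> {..B}" by (cases z) auto
  qed
  then show ?thesis by (rule finite_subset) simp
qed

lemma enumerate_by_snd:
  fixes S :: "('a \<times> nat) set"
  assumes "finite S" "S \<noteq> {}" "inj_on snd S"
  obtains m :: nat and \<alpha> :: "nat \<Rightarrow> 'a" and \<beta> :: "nat \<Rightarrow> nat"
  where "S = {(\<alpha> i, \<beta> i) | i. i \<le> m}" "strict_mono_on {..m} \<beta>"
proof -
  define ys where "ys = sorted_list_of_set (snd ` S)"
  define m where "m = length ys - 1"
  define \<beta> where "\<beta> i = ys ! i" for i
  define \<alpha> where "\<alpha> i = fst (the_inv_into S snd (\<beta> i))" for i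
  have set_ys: "set ys = snd ` S" using assms by (simp add: ys_def)
  have "ys \<noteq> []" using assms by (simp add: ys_def)
  then have "Suc m = length ys" by (simp add: m_def)
  then have index: "i \<le> m \<longleftrightarrow> i < length ys" for i by linarith
  have \<beta>_range: "\<beta> ` {..m} = snd ` S"
  proof -
    have "{..m} = {0..<length ys}"
      using \<open>Suc m = length ys\<close> lessThan_Suc_atMost atLeast0LessThan by metis
    then show ?thesis by (simp add: \<beta>_def nth_image set_ys)
  qed
  have pair: "the_inv_into S snd (\<beta> i) = (\<alpha> i, \<beta> i)" if "i \<le> m" for i
  proof -
    have "\<beta> i \<in> snd ` S" using \<beta>_range that by blast
    then show ?thesis
      using f_the_inv_into_f[OF assms(3)] unfolding \<alpha>_def by (metis prod.collapse)
  qed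
  have "S = {(\<alpha> i, \<beta> i) | i. i \<le> m}"
  proof (intro equalityI subsetI)
    fix z assume "z \<in> S"
    then obtain i where "i \<le> m" "\<beta> i = snd z"
      using \<beta>_range by (metis atMost_iff imageE imageI)
    then have "z = (\<alpha> i, \<beta> i)"
      using the_inv_into_f_f[OF assms(3) \<open>z \<in> S\<close>] pair by metis
    with \<open>i \<le> m\<close> show "z \<in> {(\<alpha> i, \<beta> i) | i. i \<le> m}" by blast
  next
    fix z assume "z \<in> {(\<alpha> i, \<beta> i) | i. i \<le> m}"
    then obtain i where "i \<le> m" "z = (\<alpha> i, \<beta> i)" by blast
    moreover have "\<beta> i \<in> snd ` S" using \<beta>_range \<open>i \<le> m\<close> by blast
    ultimately show "z \<in> S"
      using the_inv_into_into[OF assms(3), of "\<beta> i" S] pair by simp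
  qed
  moreover have "strict_mono_on {..m} \<beta>"
  proof (rule strict_mono_onI)
    fix i j assume "i \<in> {..m}" "j \<in> {..m}" "i < j"
    then show "\<beta> i < \<beta> j"
      using sorted_wrt_nth_less[OF strict_sorted_list_of_set[of "snd ` S"]]
      by (simp add: \<beta>_def ys_def[symmetric] index)
  qed
  ultimately show thesis by (rule that)
qed

definition staircase :: "(nat \<times> nat) set \<Rightarrow> nat \<Rightarrow> (nat \<Rightarrow> nat) \<Rightarrow> (nat \<Rightarrow> nat) \<Rightarrow> bool" where
  "staircase M m \<alpha> \<beta> \<longleftrightarrow> min_gens M = {(\<alpha> i, \<beta> i) | i. i \<le> m} \<and>
     (\<forall>i j. i < j \<longrightarrow> j \<le> m \<longrightarrow> \<alpha> j < \<alpha> i \<and> \<beta> i < \<beta> j) \<and> \<alpha> m = 0 \<and> \<beta> 0 = 0"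

lemma yx_tight_iff_staircase:
  "yx_tight M \<longleftrightarrow> xy_primary M \<and> (\<exists>m \<alpha> \<beta>. staircase M m \<alpha> \<beta> \<and>
     (\<exists>j \<le> m. (\<forall>i \<le> j. \<beta> i = i) \<and> (\<forall>i \<le> m - j. \<alpha> (m - i) = i)))"
  unfolding yx_tight_def staircase_def by blast

lemma staircase_exists:
  assumes "xy_primary M"
  obtains m \<alpha> \<beta> where "staircase M m \<alpha> \<beta>"
proof -
  obtain A B where A: "(A, 0) \<in> M" and B: "(0, B) \<in> M"
    using assms by (auto simp: xy_primary_def)
  obtain c where c: "(c, 0) \<in> min_gens M"
    using min_gens_below[OF A] by (metis le_zero_eq)
  obtain d where d: "(0, d) \<in> min_gens M"
    using min_gens_below[OF B] by (metis le_zero_eq)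
  have "min_gens M \<noteq> {}" using c by blast
  then obtain m :: nat and \<alpha> \<beta> :: "nat \<Rightarrow> nat"
    where gens: "min_gens M = {(\<alpha> i, \<beta> i) | i. i \<le> m}" and \<beta>: "strict_mono_on {..m} \<beta>"
    by (rule enumerate_by_snd[OF finite_min_gens[OF assms] _ min_gens_snd_inj])
  have \<alpha>: "\<alpha> j < \<alpha> i" if "i < j" "j \<le> m" for i j
    using min_gens_antichain[of "\<alpha> i" "\<beta> i" M "\<alpha> j" "\<beta> j"] strict_mono_onD[OF \<beta>, of i j] gens that
    by fastforce
  obtain k where "k \<le> m" "\<beta> k = 0" using c gens by auto
  then have "\<beta> 0 = 0" using strict_mono_onD[OF \<beta>, of 0 k] by (cases "k = 0") auto
  moreover obtain k where "k \<le> m" "\<alpha> k = 0" using d gens by auto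
  then have "\<alpha> m = 0" using \<alpha>[of k m] by (cases "k = m") auto
  ultimately show thesis
    using gens \<alpha> strict_mono_onD[OF \<beta>] by (intro that) (auto simp: staircase_def)
qed

lemma staircase_gen: "staircase M m \<alpha> \<beta> \<Longrightarrow> i \<le> m \<Longrightarrow> (\<alpha> i, \<beta> i) \<in> M"
  unfolding staircase_def using min_gens_subset by blast

lemma staircase_below:
  assumes "staircase M m \<alpha> \<beta>" "(a, b) \<in> M"
  obtains i where "i \<le> m" "\<alpha> i \<le> a" "\<beta> i \<le> b"
proof -
  obtain c d where cd: "(c, d) \<in> min_gens M" "c \<le> a" "d \<le> b"
    by (rule min_gens_below[OF assms(2)])
  then have "(c, d) \<in> {(\<alpha> i, \<beta> i) | i. i \<le> m}"
    using assms(1) by (simp add: staircase_def)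
  then obtain i where "i \<le> m" "c = \<alpha> i" "d = \<beta> i" by blast
  with cd show thesis by (intro that) simp_all
qed

lemma staircase_strict:
  "staircase M m \<alpha> \<beta> \<Longrightarrow> i < k \<Longrightarrow> k \<le> m \<Longrightarrow> \<alpha> k < \<alpha> i \<and> \<beta> i < \<beta> k"
  unfolding staircase_def by blast

lemma staircase_less_iff:
  assumes "staircase M m \<alpha> \<beta>" "i \<le> m" "k \<le> m"
  shows staircase_snd_less_iff: "\<beta> i < \<beta> k \<longleftrightarrow> i < k"
    and staircase_fst_less_iff: "\<alpha> k < \<alpha> i \<longleftrightarrow> i < k"
  using staircase_strict[OF assms(1), of i k] staircase_strict[OF assms(1), of k i] assms(2,3)
  by (cases i k rule: linorder_cases; simp)+

definition trades_x_for_y :: "(nat \<times> nat) set \<Rightarrow> nat \<Rightarrow> bool" where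
  "trades_x_for_y M q \<longleftrightarrow> (\<forall>a b. (a, b) \<in> M \<longrightarrow> b < q \<longrightarrow> 0 < a \<and> (a - 1, b + 1) \<in> M)"

definition trades_y_for_x :: "(nat \<times> nat) set \<Rightarrow> nat \<Rightarrow> bool" where
  "trades_y_for_x M p \<longleftrightarrow> (\<forall>a b. (a, b) \<in> M \<longrightarrow> a < p \<longrightarrow> 0 < b \<and> (a + 1, b - 1) \<in> M)"

definition tight_at :: "(nat \<times> nat) set \<Rightarrow> nat \<Rightarrow> nat \<Rightarrow> bool" where
  "tight_at M p q \<longleftrightarrow> xy_primary M \<and> (p, q) \<in> M \<and> trades_x_for_y M q \<and> trades_y_for_x M p"

lemma staircase_snd_Suc:
  assumes st: "staircase M m \<alpha> \<beta>" and "trades_x_for_y M q" "i < m" "\<beta> i < q"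
  shows "\<beta> (Suc i) = Suc (\<beta> i)"
proof -
  have "0 < \<alpha> i" "(\<alpha> i - 1, \<beta> i + 1) \<in> M"
    using assms staircase_gen[OF st, of i] by (auto simp: trades_x_for_y_def)
  then obtain k where k: "k \<le> m" "\<alpha> k < \<alpha> i" "\<beta> k \<le> Suc (\<beta> i)"
    by (auto elim: staircase_below[OF st])
  then have "Suc i \<le> k" using staircase_fst_less_iff[OF st, of i k] \<open>i < m\<close> by simp
  then have "\<beta> (Suc i) \<le> \<beta> k" using staircase_snd_less_iff[OF st, of k "Suc i"] k \<open>i < m\<close> by simp
  moreover have "\<beta> i < \<beta> (Suc i)" using staircase_snd_less_iff[OF st, of i "Suc i"] \<open>i < m\<close> by simp
  ultimately show ?thesis using k by linarith
qed

lemma staircase_fst_pred: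
  assumes st: "staircase M m \<alpha> \<beta>" and "trades_y_for_x M p" "0 < i" "i \<le> m" "\<alpha> i < p"
  shows "\<alpha> (i - 1) = Suc (\<alpha> i)"
proof -
  have "0 < \<beta> i" "(\<alpha> i + 1, \<beta> i - 1) \<in> M"
    using assms staircase_gen[OF st, of i] by (auto simp: trades_y_for_x_def)
  then obtain k where k: "k \<le> m" "\<alpha> k \<le> Suc (\<alpha> i)" "\<beta> k < \<beta> i"
    by (auto elim: staircase_below[OF st])
  then have "k \<le> i - 1" using staircase_snd_less_iff[OF st, of k i] \<open>i \<le> m\<close> by simp
  moreover have "i - 1 \<le> m" using \<open>i \<le> m\<close> by simp
  ultimately have "\<not> \<alpha> k < \<alpha> (i - 1)" using staircase_fst_less_iff[OF st _ \<open>k \<le> m\<close>] by simp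
  moreover have "\<alpha> i < \<alpha> (i - 1)"
    using staircase_fst_less_iff[OF st, of "i - 1" i] \<open>0 < i\<close> \<open>i \<le> m\<close> by simp
  ultimately show ?thesis using k by linarith
qed

lemma staircase_snd_eq_index:
  assumes st: "staircase M m \<alpha> \<beta>" and "trades_x_for_y M q" "j \<le> m" "\<beta> j \<le> q"
  shows "i \<le> j \<Longrightarrow> \<beta> i = i"
proof (induction i)
  case 0
  then show ?case using st by (simp add: staircase_def)
next
  case (Suc i)
  then have "\<beta> i < q" using staircase_snd_less_iff[OF st, of i j] assms by simp
  then show ?case using staircase_snd_Suc[OF st] Suc assms by simp
qed

lemma staircase_fst_eq_coindex:
  assumes st: "staircase M m \<alpha> \<beta>" and "trades_y_for_x M p" "j \<le> m" "\<alpha> j \<le> p"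
  shows "i \<le> m - j \<Longrightarrow> \<alpha> (m - i) = i"
proof (induction i)
  case 0
  then show ?case using st by (simp add: staircase_def)
next
  case (Suc i)
  then have "j < m - i" and IH: "\<alpha> (m - i) = i" by simp_all
  then have "\<alpha> (m - i) < p"
    using staircase_fst_less_iff[OF st \<open>j \<le> m\<close>, of "m - i"] \<open>\<alpha> j \<le> p\<close> by simp
  then have "\<alpha> (m - i - 1) = Suc (\<alpha> (m - i))"
    using staircase_fst_pred[OF st \<open>trades_y_for_x M p\<close>, of "m - i"] \<open>j < m - i\<close> by simp
  then show ?case using IH by simp
qed

lemma staircase_trades_x_for_y:
  assumes st: "staircase M m \<alpha> \<beta>" and M: "monomial_ideal M"
    and "j \<le> m" and \<beta>: "\<forall>i \<le> j. \<beta> i = i"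
  shows "trades_x_for_y M j"
  unfolding trades_x_for_y_def
proof (intro allI impI)
  fix a b assume ab: "(a, b) \<in> M" "b < j"
  obtain i where i: "i \<le> m" "\<alpha> i \<le> a" "\<beta> i \<le> b" by (rule staircase_below[OF st ab(1)])
  have "i < j"
    using staircase_snd_less_iff[OF st i(1) \<open>j \<le> m\<close>] \<beta>[rule_format, OF order_refl] ab(2) i(3)
    by simp
  then have "\<alpha> (Suc i) < \<alpha> i" "\<beta> (Suc i) = Suc i" "\<beta> i = i"
    using staircase_fst_less_iff[OF st, of i "Suc i"] \<beta> \<open>j \<le> m\<close> by auto
  moreover have "(\<alpha> (Suc i), \<beta> (Suc i)) \<in> M" using staircase_gen[OF st] \<open>i < j\<close> \<open>j \<le> m\<close> by simp
  ultimately show "0 < a \<and> (a - 1, b + 1) \<in> M"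
    using i monomial_idealD[OF M, of "\<alpha> (Suc i)" "\<beta> (Suc i)" "a - 1" "b + 1"] by auto
qed

lemma staircase_trades_y_for_x:
  assumes st: "staircase M m \<alpha> \<beta>" and M: "monomial_ideal M"
    and "j \<le> m" and \<alpha>: "\<forall>i \<le> m - j. \<alpha> (m - i) = i"
  shows "trades_y_for_x M (m - j)"
  unfolding trades_y_for_x_def
proof (intro allI impI)
  fix a b assume ab: "(a, b) \<in> M" "a < m - j"
  obtain i where i: "i \<le> m" "\<alpha> i \<le> a" "\<beta> i \<le> b" by (rule staircase_below[OF st ab(1)])
  have \<alpha>_tail: "\<alpha> k = m - k" if "j \<le> k" "k \<le> m" for k
    using \<alpha>[rule_format, of "m - k"] that by simp
  then have "j < i"
    using staircase_fst_less_iff[OF st \<open>j \<le> m\<close> i(1)] \<open>j \<le> m\<close> ab(2) i(2) by simp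
  then have "\<alpha> (i - 1) = Suc (\<alpha> i)"
    using \<alpha>_tail[of "i - 1"] \<alpha>_tail[of i] i(1) by simp
  moreover have "\<beta> (i - 1) < \<beta> i" using staircase_snd_less_iff[OF st, of "i - 1" i] i \<open>j < i\<close> by simp
  moreover have "(\<alpha> (i - 1), \<beta> (i - 1)) \<in> M" using staircase_gen[OF st] i by simp
  ultimately show "0 < b \<and> (a + 1, b - 1) \<in> M"
    using i monomial_idealD[OF M, of "\<alpha> (i - 1)" "\<beta> (i - 1)" "a + 1" "b - 1"] by auto
qed

lemma yx_tight_iff_tight_at: "yx_tight M \<longleftrightarrow> (\<exists>p q. tight_at M p q)"
proof
  assume "yx_tight M"
  then obtain m \<alpha> \<beta> j where M: "xy_primary M" and st: "staircase M m \<alpha> \<beta>" and "j \<le> m"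
    and \<beta>: "\<forall>i \<le> j. \<beta> i = i" and \<alpha>: "\<forall>i \<le> m - j. \<alpha> (m - i) = i"
    unfolding yx_tight_iff_staircase by blast
  have "(\<alpha> j, \<beta> j) = (m - j, j)" using \<alpha>[rule_format, of "m - j"] \<beta> \<open>j \<le> m\<close> by simp
  then have "(m - j, j) \<in> M" using staircase_gen[OF st \<open>j \<le> m\<close>] by simp
  moreover have "monomial_ideal M" using M by (simp add: xy_primary_def)
  ultimately have "tight_at M (m - j) j"
    using M staircase_trades_x_for_y[OF st _ \<open>j \<le> m\<close> \<beta>] staircase_trades_y_for_x[OF st _ \<open>j \<le> m\<close> \<alpha>]
    by (simp add: tight_at_def)
  then show "\<exists>p q. tight_at M p q" by blast
next
  assume "\<exists>p q. tight_at M p q"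
  then obtain p q where M: "xy_primary M" and "(p, q) \<in> M"
    and x: "trades_x_for_y M q" and y: "trades_y_for_x M p"
    by (auto simp: tight_at_def)
  obtain m \<alpha> \<beta> where st: "staircase M m \<alpha> \<beta>" using staircase_exists[OF M] .
  obtain j where "j \<le> m" "\<alpha> j \<le> p" "\<beta> j \<le> q" by (rule staircase_below[OF st \<open>(p, q) \<in> M\<close>])
  then show "yx_tight M"
    using M st staircase_snd_eq_index[OF st x] staircase_fst_eq_coindex[OF st y]
    unfolding yx_tight_iff_staircase by blast
qed

lemma ideal_prod_memI:
  "(a1, b1) \<in> I \<Longrightarrow> (a2, b2) \<in> J \<Longrightarrow> a1 + a2 \<le> a \<Longrightarrow> b1 + b2 \<le> b \<Longrightarrow> (a, b) \<in> ideal_prod I J"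
  unfolding ideal_prod_def by blast

lemma monomial_ideal_ideal_prod: "monomial_ideal (ideal_prod I J)"
  unfolding monomial_ideal_def ideal_prod_def by (fastforce intro: order_trans)

lemma xy_primary_ideal_prod:
  assumes "xy_primary I" "xy_primary J"
  shows "xy_primary (ideal_prod I J)"
proof -
  obtain a1 b1 a2 b2 where "(a1, 0) \<in> I" "(0, b1) \<in> I" "(a2, 0) \<in> J" "(0, b2) \<in> J"
    using assms by (auto simp: xy_primary_def)
  then have "(a1 + a2, 0) \<in> ideal_prod I J" "(0, b1 + b2) \<in> ideal_prod I J"
    by (auto intro: ideal_prod_memI)
  moreover have "(0, 0) \<notin> ideal_prod I J"
    using assms by (auto simp: xy_primary_def ideal_prod_def)
  ultimately show ?thesis using monomial_ideal_ideal_prod by (auto simp: xy_primary_def)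
qed

lemma trades_x_for_y_ideal_prod:
  assumes I: "trades_x_for_y I q1" and J: "trades_x_for_y J q2"
  shows "trades_x_for_y (ideal_prod I J) (q1 + q2)"
  unfolding trades_x_for_y_def
proof (intro allI impI)
  fix a b assume "(a, b) \<in> ideal_prod I J" "b < q1 + q2"
  then obtain a1 b1 a2 b2 where f: "(a1, b1) \<in> I" "(a2, b2) \<in> J" "a1 + a2 \<le> a" "b1 + b2 \<le> b"
    and "b1 < q1 \<or> b2 < q2"
    unfolding ideal_prod_def by fastforce
  then consider "0 < a1" "(a1 - 1, b1 + 1) \<in> I" | "0 < a2" "(a2 - 1, b2 + 1) \<in> J"
    using I J unfolding trades_x_for_y_def by blast
  then show "0 < a \<and> (a - 1, b + 1) \<in> ideal_prod I J"
  proof cases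
    case 1
    with f show ?thesis by (auto intro: ideal_prod_memI[OF 1(2) f(2)])
  next
    case 2
    with f show ?thesis by (auto intro: ideal_prod_memI[OF f(1) 2(2)])
  qed
qed

lemma trades_y_for_x_ideal_prod:
  assumes I: "trades_y_for_x I p1" and J: "trades_y_for_x J p2"
  shows "trades_y_for_x (ideal_prod I J) (p1 + p2)"
  unfolding trades_y_for_x_def
proof (intro allI impI)
  fix a b assume "(a, b) \<in> ideal_prod I J" "a < p1 + p2"
  then obtain a1 b1 a2 b2 where f: "(a1, b1) \<in> I" "(a2, b2) \<in> J" "a1 + a2 \<le> a" "b1 + b2 \<le> b"
    and "a1 < p1 \<or> a2 < p2"
    unfolding ideal_prod_def by fastforce
  then consider "0 < b1" "(a1 + 1, b1 - 1) \<in> I" | "0 < b2" "(a2 + 1, b2 - 1) \<in> J"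
    using I J unfolding trades_y_for_x_def by blast
  then show "0 < b \<and> (a + 1, b - 1) \<in> ideal_prod I J"
  proof cases
    case 1
    with f show ?thesis by (auto intro: ideal_prod_memI[OF 1(2) f(2)])
  next
    case 2
    with f show ?thesis by (auto intro: ideal_prod_memI[OF f(1) 2(2)])
  qed
qed

lemma tight_at_ideal_prod:
  "tight_at I p1 q1 \<Longrightarrow> tight_at J p2 q2 \<Longrightarrow> tight_at (ideal_prod I J) (p1 + p2) (q1 + q2)"
  unfolding tight_at_def
  using xy_primary_ideal_prod ideal_prod_memI[of _ _ I _ _ J] trades_x_for_y_ideal_prod trades_y_for_x_ideal_prod
  by blast

theorem theorem2p12:
  assumes "yx_tight I" and "yx_tight J"
  shows "yx_tight (ideal_prod I J)"
  using assms tight_at_ideal_prod unfolding yx_tight_iff_tight_at by blast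

end
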